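(* Let $X$ be a locally K-elastic Polish space without isolated points, let $\Gamma$ be the group of self-homeomorphisms $h$ of $X$ for which $\{x\in X:h(x)\neq x\}$ has compact closure (the same conclusion holds for the group of all self-homeomorphisms), acting by application, and let $I$ be the ideal of nowhere dense subsets of $X$. Then Player II has a winning strategy in the DC game for $\Gamma\curvearrowright X, I$.
   Context: A Polish space $X$ is K-elastic if it is locally compact and for every nonempty open set $O\subseteq X$ with compact closure and every compact $K\subseteq X$ there is a self-homeomorphism $h$ of $X$ with $K\subseteq h[O]$ and such that $\{x\in X: h(x)\neq x\}$ has compact closure. $X$ is locally K-elastic if it has a basis of open sets each of which (as a subspace) is K-elastic. The DC game for a group $\Gamma$ acting on $X$ and an invariant ideal $I$: players I and II alternate for $\omega$ rounds; at round $n$ Player I plays $a_n\in I$ and Player II answers with $\gamma_n\in\Gamma$, subject to $\gamma_0=1$ and $\gamma_n$ fixes every element of $\bigcup_{m<n}\gamma_m\cdot a_m$ (where $\gamma\cdot a=\{\gamma\cdot x:x\in a\}$). Player II wins if $\bigcup_{n}\gamma_n\cdot a_n\in I$. *)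

theory Defs
  imports "HOL-Analysis.Analysis"
begin

definition Polish_space :: "'a topology \<Rightarrow> bool" where
  "Polish_space X \<longleftrightarrow> completely_metrizable_space X \<and> separable_space X"

definition moved_set :: "'a topology \<Rightarrow> ('a \<Rightarrow> 'a) \<Rightarrow> 'a set" where
  "moved_set X h = {x \<in> topspace X. h x \<noteq> x}"

definition K_elastic :: "'a topology \<Rightarrow> bool" where
  "K_elastic X \<longleftrightarrow> Polish_space X \<and> locally_compact_space X \<and>
     (\<forall>W K. openin X W \<and> W \<noteq> {} \<and> compactin X (X closure_of W) \<and> compactin X K \<longrightarrow>
        (\<exists>h. homeomorphic_map X X h \<and> K \<subseteq> h ` W \<and>
             compactin X (X closure_of (moved_set X h))))"

definition locally_K_elastic :: "'a topology \<Rightarrow> bool" where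
  "locally_K_elastic X \<longleftrightarrow>
     (\<forall>U x. openin X U \<and> x \<in> U \<longrightarrow>
        (\<exists>V. openin X V \<and> x \<in> V \<and> V \<subseteq> U \<and> K_elastic (subtopology X V)))"

text \<open>The group of compactly supported self-homeomorphisms. Elements are represented
  canonically as maps that are the identity outside the topspace.\<close>
definition compactly_supported_homeos :: "'a topology \<Rightarrow> ('a \<Rightarrow> 'a) set" where
  "compactly_supported_homeos X =
     {h. homeomorphic_map X X h \<and> (\<forall>x. x \<notin> topspace X \<longrightarrow> h x = x) \<and>
         compactin X (X closure_of (moved_set X h))}"

definition nowhere_dense_sets :: "'a topology \<Rightarrow> 'a set set" where
  "nowhere_dense_sets X = {S. S \<subseteq> topspace X \<and> X interior_of (X closure_of S) = {}}"

text \<open>A strategy for Player II maps the list [a_0,...,a_n] of Player I's moves so far to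
  the answer gamma_n.\<close>
definition DC_II_winning_strategy ::
  "('a \<Rightarrow> 'a) set \<Rightarrow> 'a set set \<Rightarrow> ('a set list \<Rightarrow> 'a \<Rightarrow> 'a) \<Rightarrow> bool" where
  "DC_II_winning_strategy G I \<sigma> \<longleftrightarrow>
     (\<forall>a :: nat \<Rightarrow> 'a set. (\<forall>n. a n \<in> I) \<longrightarrow>
        (\<forall>n. \<sigma> (map a [0..<Suc n]) \<in> G) \<and>
        \<sigma> [a 0] = id \<and>
        (\<forall>n m x. m < n \<and> x \<in> \<sigma> (map a [0..<Suc m]) ` a m \<longrightarrow>
            \<sigma> (map a [0..<Suc n]) x = x) \<and>
        (\<Union>n. \<sigma> (map a [0..<Suc n]) ` a n) \<in> I)"

definition DC_II_wins :: "('a \<Rightarrow> 'a) set \<Rightarrow> 'a set set \<Rightarrow> bool" where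
  "DC_II_wins G I \<longleftrightarrow> (\<exists>\<sigma>. DC_II_winning_strategy G I \<sigma>)"

end

theory Submission
  imports Defs
begin

text \<open>Player II keeps finitely many pairwise disjoint open K-elastic charts \<open>E\<^sub>i\<close>, each
  disjoint from all moves so far and carrying a compact core \<open>C\<^sub>i \<subseteq> E\<^sub>i\<close>. When Player I plays
  a nowhere dense set \<open>a\<close>, K-elasticity of \<open>E\<^sub>i\<close> produces a homeomorphism supported in \<open>E\<^sub>i\<close>
  that moves \<open>a\<close> off a smaller K-elastic neighbourhood \<open>E\<^sub>i'\<close> of \<open>C\<^sub>i\<close>: choose a small open
  \<open>W \<subseteq> E\<^sub>i\<close> away from the closure of \<open>a\<close> and stretch it over the closure of \<open>E\<^sub>i'\<close>.
  II answers with the composite of these homeomorphisms, which fixes all earlier moves since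
  they lie outside the charts, and replaces \<open>E\<^sub>i\<close> by \<open>E\<^sub>i'\<close>. Before answering in round \<open>n\<close>,
  II enlarges a core or adds a new chart so that the cores contain a nonempty open subset of the
  \<open>n\<close>-th member of a countable \<open>\<pi>\<close>-base. The cores only grow and never meet a move, so the union
  of the moves misses a nonempty open subset of every basic open set: it is nowhere dense.\<close>

section \<open>Nowhere dense sets\<close>

lemma nowhere_dense_sets_Un:
  assumes "A \<in> nowhere_dense_sets X" and "B \<in> nowhere_dense_sets X"
  shows "A \<union> B \<in> nowhere_dense_sets X"
  using assms interior_of_union_eq_empty[of X "X closure_of A" "X closure_of B"]
  by (simp add: nowhere_dense_sets_def closure_of_Un)

lemma nowhere_dense_sets_image:
  assumes g: "homeomorphic_map X X g" and S: "S \<in> nowhere_dense_sets X"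
  shows "g ` S \<in> nowhere_dense_sets X"
proof -
  have S_sub: "S \<subseteq> topspace X"
    using S by (simp add: nowhere_dense_sets_def)
  have "X interior_of (X closure_of (g ` S)) = g ` (X interior_of (X closure_of S))"
    using homeomorphic_map_closure_of[OF g S_sub] homeomorphic_map_interior_of[OF g]
    by (simp add: closure_of_subset_topspace)
  moreover have "g ` S \<subseteq> topspace X"
    using S_sub homeomorphic_imp_surjective_map[OF g] by blast
  ultimately show ?thesis
    using S by (simp add: nowhere_dense_sets_def)
qed

lemma openin_diff_closure_of_nowhere_dense:
  assumes "S \<in> nowhere_dense_sets X" "openin X V" "V \<noteq> {}"
  shows "V - X closure_of S \<noteq> {}"
  using assms by (auto simp: nowhere_dense_sets_def interior_of_eq_empty_alt)

section \<open>Compactly supported homeomorphisms\<close>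

lemma id_in_compactly_supported_homeos: "id \<in> compactly_supported_homeos X"
  by (simp add: compactly_supported_homeos_def moved_set_def)

lemma compactly_supported_homeos_comp:
  assumes "g \<in> compactly_supported_homeos X" "h \<in> compactly_supported_homeos X"
    and "Hausdorff_space X"
  shows "h \<circ> g \<in> compactly_supported_homeos X"
proof -
  have "moved_set X (h \<circ> g) \<subseteq> moved_set X g \<union> moved_set X h"
    by (auto simp: moved_set_def)
  then have "X closure_of moved_set X (h \<circ> g) \<subseteq>
      X closure_of moved_set X g \<union> X closure_of moved_set X h"
    by (metis closure_of_Un closure_of_mono)
  moreover have "compactin X (X closure_of moved_set X g \<union> X closure_of moved_set X h)"
    using assms by (simp add: compactly_supported_homeos_def compactin_Un)
  ultimately have "compactin X (X closure_of moved_set X (h \<circ> g))"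
    by (simp add: closed_compactin)
  with assms show ?thesis
    by (auto simp: compactly_supported_homeos_def intro: homeomorphic_map_compose)
qed

lemma continuous_map_extend_by_identity:
  assumes E: "openin X E" and K: "closedin X K" "K \<subseteq> E"
    and f: "continuous_map (subtopology X E) (subtopology X E) f"
    and fixed: "\<And>x. x \<in> E \<Longrightarrow> x \<notin> K \<Longrightarrow> f x = x"
  shows "continuous_map X X (\<lambda>x. if x \<in> E then f x else x)"
proof (rule pasting_lemma[where I="{True, False}" and T="\<lambda>b. if b then E else topspace X - K"
      and f="\<lambda>b. if b then f else id"])
  have "continuous_map (subtopology X E) X f"
    using f continuous_map_in_subtopology by blast
  then show "continuous_map (subtopology X (if i then E else topspace X - K)) X (if i then f else id)"
    for i
    by (cases i) (auto simp: continuous_map_from_subtopology)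
qed (use E K fixed in \<open>auto split: if_splits\<close>)

lemma compactly_supported_homeos_extend:
  assumes H: "Hausdorff_space X" and E: "openin X E"
    and h: "homeomorphic_map (subtopology X E) (subtopology X E) h"
    and supp: "compactin (subtopology X E) (subtopology X E closure_of moved_set (subtopology X E) h)"
  shows "(\<lambda>x. if x \<in> E then h x else x) \<in> compactly_supported_homeos X"
proof -
  have topE: "topspace (subtopology X E) = E"
    using openin_subset[OF E] by auto
  obtain k where hk: "homeomorphic_maps (subtopology X E) (subtopology X E) h k"
    using h homeomorphic_map_maps by blast
  then have h_cont: "continuous_map (subtopology X E) (subtopology X E) h"
    and k_cont: "continuous_map (subtopology X E) (subtopology X E) k"
    and kh: "\<And>x. x \<in> E \<Longrightarrow> k (h x) = x" and hk': "\<And>x. x \<in> E \<Longrightarrow> h (k x) = x"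
    using topE by (auto simp: homeomorphic_maps_def)
  have hE: "\<And>x. x \<in> E \<Longrightarrow> h x \<in> E" and kE: "\<And>x. x \<in> E \<Longrightarrow> k x \<in> E"
    using h_cont k_cont topE by (auto simp: continuous_map_def)
  define M where "M = moved_set (subtopology X E) h"
  define K where "K = subtopology X E closure_of M"
  have M: "M = {x \<in> E. h x \<noteq> x}"
    using topE by (auto simp: M_def moved_set_def)
  have MK: "M \<subseteq> K"
    unfolding K_def using topE M by (simp add: closure_of_subset)
  have KE: "K \<subseteq> E"
    unfolding K_def using closure_of_subset_topspace[of "subtopology X E" M] topE by simp
  have K_compact: "compactin X K"
    using supp by (simp add: K_def M_def compactin_subtopology)
  then have K_closed: "closedin X K"
    using H compactin_imp_closedin by blast
  have h_fixed: "\<And>x. x \<in> E \<Longrightarrow> x \<notin> K \<Longrightarrow> h x = x"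
    using MK M by blast
  then have k_fixed: "\<And>x. x \<in> E \<Longrightarrow> x \<notin> K \<Longrightarrow> k x = x"
    using kh by metis
  define g where "g = (\<lambda>x. if x \<in> E then h x else x)"
  define g' where "g' = (\<lambda>x. if x \<in> E then k x else x)"
  have "homeomorphic_maps X X g g'"
    unfolding homeomorphic_maps_def g_def g'_def
    using continuous_map_extend_by_identity[OF E K_closed KE h_cont h_fixed]
      continuous_map_extend_by_identity[OF E K_closed KE k_cont k_fixed] hE kE kh hk'
    by auto
  moreover have "moved_set X g = M"
    using M E openin_subset by (auto simp: moved_set_def g_def)
  moreover have "X closure_of M \<subseteq> K"
    using MK K_closed closure_of_minimal by blast
  ultimately show ?thesis
    using K_compact E openin_subset closed_compactin[OF K_compact]
    unfolding g_def compactly_supported_homeos_def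
    by (auto simp: homeomorphic_maps_imp_map)
qed

definition supported_in :: "'a set \<Rightarrow> ('a \<Rightarrow> 'a) \<Rightarrow> bool" where
  "supported_in E g \<longleftrightarrow> (\<forall>x. x \<notin> E \<longrightarrow> g x = x) \<and> g ` E \<subseteq> E"

lemma supported_in_id: "supported_in E id"
  by (simp add: supported_in_def)

lemma supported_in_comp:
  assumes "supported_in E g" "supported_in D h"
  shows "supported_in (E \<union> D) (h \<circ> g)"
proof -
  have "g y \<in> E \<union> D" if "y \<in> E \<union> D" for y
    using assms that by (cases "y \<in> E") (auto simp: supported_in_def)
  moreover have "h y \<in> E \<union> D" if "y \<in> E \<union> D" for y
    using assms that by (cases "y \<in> D") (auto simp: supported_in_def)
  ultimately show ?thesis
    using assms by (auto simp: supported_in_def)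
qed

lemma supported_in_image_disjnt:
  assumes "supported_in D h" "disjnt D S" "disjnt A S"
  shows "disjnt (h ` A) S"
proof -
  have "h y \<notin> S" if "y \<in> A" for y
    using assms that unfolding supported_in_def disjnt_def by (cases "y \<in> D") auto
  then show ?thesis
    by (auto simp: disjnt_def)
qed

section \<open>K-elastic open sets\<close>

lemma moved_set_conjugate:
  assumes f: "homeomorphic_maps S T f f'" and h: "homeomorphic_map S S h"
  shows "moved_set T (f \<circ> h \<circ> f') = f ` moved_set S h"
proof -
  have hS: "\<And>x. x \<in> topspace S \<Longrightarrow> h x \<in> topspace S"
    using h homeomorphic_imp_continuous_map continuous_map_image_subset_topspace by blast
  have ff': "\<And>y. y \<in> topspace T \<Longrightarrow> f (f' y) = y" "\<And>y. y \<in> topspace T \<Longrightarrow> f' y \<in> topspace S"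
    and f'f: "\<And>x. x \<in> topspace S \<Longrightarrow> f' (f x) = x" "\<And>x. x \<in> topspace S \<Longrightarrow> f x \<in> topspace T"
    using f by (auto simp: homeomorphic_maps_def continuous_map_def)
  show ?thesis
  proof (intro equalityI subsetI)
    fix y assume "y \<in> moved_set T (f \<circ> h \<circ> f')"
    then have y: "y \<in> topspace T" "f (h (f' y)) \<noteq> y"
      by (auto simp: moved_set_def)
    then have "f' y \<in> moved_set S h"
      using ff' by (auto simp: moved_set_def)
    then show "y \<in> f ` moved_set S h"
      using ff' y by (metis image_eqI)
  next
    fix y assume "y \<in> f ` moved_set S h"
    then obtain x where x: "x \<in> topspace S" "h x \<noteq> x" "y = f x"
      by (auto simp: moved_set_def)
    then have "f (h x) \<noteq> f x"
      using f'f hS by metis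
    then show "y \<in> moved_set T (f \<circ> h \<circ> f')"
      using x f'f by (simp add: moved_set_def)
  qed
qed

lemma K_elastic_homeomorphic_map:
  assumes f: "homeomorphic_map S T f" and S: "K_elastic S"
  shows "K_elastic T"
proof -
  obtain f' where ff': "homeomorphic_maps S T f f'"
    using f homeomorphic_map_maps by blast
  have f': "homeomorphic_map T S f'"
    using ff' homeomorphic_maps_map by blast
  have ST: "S homeomorphic_space T"
    using ff' homeomorphic_space_def by blast
  have "\<exists>h. homeomorphic_map T T h \<and> K \<subseteq> h ` W \<and> compactin T (T closure_of moved_set T h)"
    if W: "openin T W" "W \<noteq> {}" "compactin T (T closure_of W)" and K: "compactin T K" for W K
  proof -
    have WT: "W \<subseteq> topspace T" and KT: "K \<subseteq> topspace T"
      using openin_subset[OF W(1)] compactin_subset_topspace[OF K] by auto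
    have "openin S (f' ` W)"
      using homeomorphic_map_openness[OF f' WT] W by simp
    moreover have "compactin S (S closure_of (f' ` W))"
      using homeomorphic_map_closure_of[OF f' WT]
        image_compactin[OF W(3) homeomorphic_imp_continuous_map[OF f']] by simp
    moreover have "compactin S (f' ` K)"
      using image_compactin[OF K homeomorphic_imp_continuous_map[OF f']] .
    moreover have "f' ` W \<noteq> {}"
      using W(2) by simp
    ultimately obtain h where h: "homeomorphic_map S S h" and Kh: "f' ` K \<subseteq> h ` f' ` W"
      and supp: "compactin S (S closure_of moved_set S h)"
      using S unfolding K_elastic_def by meson
    have "homeomorphic_map T T (f \<circ> h \<circ> f')"
      using homeomorphic_map_compose[OF f' homeomorphic_map_compose[OF h f]] .
    moreover have "K \<subseteq> (f \<circ> h \<circ> f') ` W"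
    proof
      fix y assume "y \<in> K"
      then obtain w where "w \<in> W" "f' y = h (f' w)"
        using Kh by blast
      moreover have "f (f' y) = y"
        using ff' KT \<open>y \<in> K\<close> by (auto simp: homeomorphic_maps_def)
      ultimately show "y \<in> (f \<circ> h \<circ> f') ` W"
        by (metis comp_apply image_eqI)
    qed
    moreover have "T closure_of moved_set T (f \<circ> h \<circ> f') = f ` (S closure_of moved_set S h)"
      using moved_set_conjugate[OF ff' h] homeomorphic_map_closure_of[OF f]
      by (simp add: moved_set_def)
    then have "compactin T (T closure_of moved_set T (f \<circ> h \<circ> f'))"
      using image_compactin[OF supp homeomorphic_imp_continuous_map[OF f]] by simp
    ultimately show ?thesis
      by meson
  qed
  moreover have "Polish_space T" "locally_compact_space T"
    using S homeomorphic_completely_metrizable_space[OF ST] homeomorphic_separable_space[OF ST]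
      homeomorphic_locally_compact_space[OF ST]
    by (auto simp: K_elastic_def Polish_space_def)
  ultimately show ?thesis
    unfolding K_elastic_def by blast
qed

lemma locally_compact_open_nbhd_compact_closure:
  assumes H: "Hausdorff_space X" and E: "openin X E"
    and lc: "locally_compact_space (subtopology X E)"
    and V: "openin X V" "V \<subseteq> E" "x \<in> V"
  obtains U where "openin X U" "x \<in> U" "compactin X (X closure_of U)" "X closure_of U \<subseteq> V"
proof -
  have "neighbourhood_base_of (\<lambda>C. compactin (subtopology X E) C \<and> closedin (subtopology X E) C)
      (subtopology X E)"
    using locally_compact_space_neighbourhood_base_closedin[of "subtopology X E"] H lc
    by (simp add: Hausdorff_space_subtopology)
  moreover have "openin (subtopology X E) V"
    using V E by (simp add: openin_open_subtopology)
  ultimately obtain U C where U: "openin (subtopology X E) U" and C: "compactin (subtopology X E) C"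
    and "x \<in> U" "U \<subseteq> C" "C \<subseteq> V"
    using V(3) unfolding neighbourhood_base_of by meson
  moreover have "compactin X C"
    using C by (simp add: compactin_subtopology)
  moreover have "X closure_of U \<subseteq> C"
    using H \<open>compactin X C\<close> \<open>U \<subseteq> C\<close> closure_of_minimal compactin_imp_closedin by blast
  ultimately show ?thesis
    using that U E openin_trans_full closed_compactin by (metis closedin_closure_of subset_trans)
qed

lemma K_elastic_openin_subtopologyD:
  assumes E: "openin X E" and elastic: "K_elastic (subtopology X E)"
    and W: "openin X W" "W \<noteq> {}" "compactin X (X closure_of W)" "X closure_of W \<subseteq> E"
    and K: "compactin X K" "K \<subseteq> E"
  obtains h where "homeomorphic_map (subtopology X E) (subtopology X E) h" "K \<subseteq> h ` W"
    "compactin (subtopology X E) (subtopology X E closure_of moved_set (subtopology X E) h)"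
proof -
  have "W \<subseteq> E"
    using W openin_subset closure_of_subset by fastforce
  then have "openin (subtopology X E) W"
    using W E by (simp add: openin_open_subtopology)
  moreover have "subtopology X E closure_of W = X closure_of W"
    using \<open>W \<subseteq> E\<close> W(4) by (simp add: closure_of_subtopology Int_absorb1 Int_absorb2)
  then have "compactin (subtopology X E) (subtopology X E closure_of W)"
    using W by (simp add: compactin_subtopology)
  moreover have "compactin (subtopology X E) K"
    using K by (simp add: compactin_subtopology)
  ultimately show ?thesis
    using that elastic W(2) unfolding K_elastic_def by blast
qed

lemma K_elastic_homeomorphic_image:
  assumes H: "Hausdorff_space X" and E: "openin X E"
    and f: "homeomorphic_map (subtopology X E) (subtopology X E) f"
    and B: "openin X B" "K_elastic (subtopology X B)" "compactin X (X closure_of B)"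
      "X closure_of B \<subseteq> E"
  shows "openin X (f ` B)" "K_elastic (subtopology X (f ` B))"
    "compactin X (X closure_of (f ` B))" "X closure_of (f ` B) \<subseteq> E"
proof -
  have BE: "B \<subseteq> E"
    using closure_of_subset[OF openin_subset[OF B(1)]] B(4) by blast
  have topE: "topspace (subtopology X E) = E"
    using openin_subset[OF E] by auto
  then have "f ` E = E"
    using homeomorphic_imp_surjective_map[OF f] by simp
  then have fB: "f ` B \<subseteq> E" "f ` (X closure_of B) \<subseteq> E"
    using BE B(4) by (metis image_mono)+
  have "openin (subtopology X E) (f ` B)"
    using homeomorphic_map_openness[OF f] B(1) BE topE E openin_subset[OF B(1)]
    by (simp add: openin_open_subtopology)
  then show "openin X (f ` B)"
    using E openin_trans_full by blast
  have "homeomorphic_map (subtopology X B) (subtopology X (f ` B)) f"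
    using homeomorphic_map_subtopologies[OF f, of B "f ` B"] topE BE fB
    by (simp add: subtopology_subtopology Int_absorb1)
  then show "K_elastic (subtopology X (f ` B))"
    using K_elastic_homeomorphic_map B(2) by blast
  have fB_compact: "compactin X (f ` (X closure_of B))"
    using image_compactin[OF _ homeomorphic_imp_continuous_map[OF f]] B(3,4) fB
    by (simp add: compactin_subtopology)
  have "f ` B \<subseteq> f ` (X closure_of B)"
    using closure_of_subset[OF openin_subset[OF B(1)]] by (rule image_mono)
  then have "X closure_of (f ` B) \<subseteq> f ` (X closure_of B)"
    using H fB_compact compactin_imp_closedin closure_of_minimal by blast
  then show "compactin X (X closure_of (f ` B))" "X closure_of (f ` B) \<subseteq> E"
    using closed_compactin[OF fB_compact] fB(2) by auto
qed

lemma K_elastic_nbhd_of_compact: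
  assumes H: "Hausdorff_space X" and LK: "locally_K_elastic X"
    and E: "openin X E" "K_elastic (subtopology X E)" "E \<noteq> {}"
    and C: "compactin X C" "C \<subseteq> E"
  obtains E' where "openin X E'" "K_elastic (subtopology X E')" "C \<subseteq> E'"
    "compactin X (X closure_of E')" "X closure_of E' \<subseteq> E"
proof -
  have lc: "locally_compact_space (subtopology X E)"
    using E by (simp add: K_elastic_def)
  obtain y where "y \<in> E"
    using E by blast
  then obtain B' where B': "openin X B'" "y \<in> B'" "compactin X (X closure_of B')"
    "X closure_of B' \<subseteq> E"
    by (rule locally_compact_open_nbhd_compact_closure[OF H E(1) lc E(1) order_refl])
  then obtain B where B: "openin X B" "y \<in> B" "B \<subseteq> B'" "K_elastic (subtopology X B)"
    using LK[unfolded locally_K_elastic_def, rule_format, of B' y] by blast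
  have "X closure_of B \<subseteq> X closure_of B'"
    using B(3) by (rule closure_of_mono)
  then have B_closure: "compactin X (X closure_of B)" "X closure_of B \<subseteq> E"
    using B'(4) closed_compactin[OF B'(3) _ closedin_closure_of] by auto
  have "B \<noteq> {}"
    using B(2) by blast
  then obtain f where f: "homeomorphic_map (subtopology X E) (subtopology X E) f" and "C \<subseteq> f ` B"
    using K_elastic_openin_subtopologyD[OF E(1,2) B(1) _ B_closure C] by blast
  then show ?thesis
    using that K_elastic_homeomorphic_image[OF H E(1) f B(1,4) B_closure] by blast
qed

lemma K_elastic_push_off:
  assumes H: "Hausdorff_space X"
    and E: "openin X E" "K_elastic (subtopology X E)" "E \<noteq> {}"
    and K: "compactin X K" "K \<subseteq> E" and a: "a \<in> nowhere_dense_sets X"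
  obtains g where "g \<in> compactly_supported_homeos X" "supported_in E g" "disjnt (g ` a) K"
proof -
  have lc: "locally_compact_space (subtopology X E)"
    using E by (simp add: K_elastic_def)
  obtain z where z: "z \<in> E - X closure_of a"
    using openin_diff_closure_of_nowhere_dense[OF a E(1,3)] by blast
  have "openin X (E - X closure_of a)"
    using E(1) by (simp add: openin_diff)
  then obtain W where W: "openin X W" "z \<in> W" "compactin X (X closure_of W)"
    "X closure_of W \<subseteq> E - X closure_of a"
    by (rule locally_compact_open_nbhd_compact_closure[OF H E(1) lc _ Diff_subset z])
  have W_sub: "W \<subseteq> E - X closure_of a"
    using closure_of_subset[OF openin_subset[OF W(1)]] W(4) by blast
  have "W \<noteq> {}" "X closure_of W \<subseteq> E"
    using W(2,4) by blast+
  then obtain h where h: "homeomorphic_map (subtopology X E) (subtopology X E) h" and "K \<subseteq> h ` W"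
    and supp: "compactin (subtopology X E) (subtopology X E closure_of moved_set (subtopology X E) h)"
    using K_elastic_openin_subtopologyD[OF E(1,2) W(1) _ W(3) _ K] by blast
  have topE: "topspace (subtopology X E) = E"
    using openin_subset[OF E(1)] by auto
  have hE: "h ` E = E" and h_inj: "inj_on h E"
    using homeomorphic_imp_surjective_map[OF h] homeomorphic_imp_injective_map[OF h] topE by simp_all
  define g where "g = (\<lambda>x. if x \<in> E then h x else x)"
  have "supported_in E g"
    using hE by (auto simp: supported_in_def g_def)
  moreover have "disjnt (g ` a) K"
  proof -
    have "h x \<notin> K" if "x \<in> E" "x \<in> a" for x
    proof
      assume "h x \<in> K"
      then obtain w where "w \<in> W" "h x = h w"
        using \<open>K \<subseteq> h ` W\<close> by blast
      then have "x = w"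
        using inj_onD[OF h_inj] W_sub \<open>x \<in> E\<close> by blast
      then show False
        using \<open>w \<in> W\<close> W_sub \<open>x \<in> a\<close> closure_of_subset[of a X] a
        by (auto simp: nowhere_dense_sets_def)
    qed
    then show ?thesis
      using K(2) by (auto simp: disjnt_def g_def)
  qed
  moreover have "g \<in> compactly_supported_homeos X"
    unfolding g_def using H E(1) h supp by (rule compactly_supported_homeos_extend)
  ultimately show ?thesis
    using that by blast
qed

lemma K_elastic_avoid_nowhere_dense:
  assumes H: "Hausdorff_space X" and LK: "locally_K_elastic X"
    and E: "openin X E" "K_elastic (subtopology X E)"
    and C: "compactin X C" "C \<subseteq> E" and a: "a \<in> nowhere_dense_sets X"
  obtains g E' where "g \<in> compactly_supported_homeos X" "supported_in E g"
    "openin X E'" "K_elastic (subtopology X E')" "C \<subseteq> E'" "E' \<subseteq> E" "disjnt (g ` a) E'"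
proof (cases "E = {}")
  case True
  show ?thesis
    by (rule that[of id E]) (use E C True id_in_compactly_supported_homeos supported_in_id in auto)
next
  case False
  obtain E' where E': "openin X E'" "K_elastic (subtopology X E')" "C \<subseteq> E'"
    "compactin X (X closure_of E')" "X closure_of E' \<subseteq> E"
    using K_elastic_nbhd_of_compact[OF H LK E False C] .
  obtain g where g: "g \<in> compactly_supported_homeos X" "supported_in E g"
    "disjnt (g ` a) (X closure_of E')"
    using K_elastic_push_off[OF H E False E'(4,5) a] .
  have "E' \<subseteq> X closure_of E'"
    using closure_of_subset[OF openin_subset[OF E'(1)]] .
  then show ?thesis
    using that[OF g(1,2) E'(1,2,3)] E'(5) disjnt_subset2[OF g(3)] by blast
qed

section \<open>Families of disjoint K-elastic charts\<close>

definition elastic_chart :: "'a topology \<Rightarrow> 'a set \<times> 'a set \<Rightarrow> bool" where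
  "elastic_chart X p \<longleftrightarrow> openin X (fst p) \<and> K_elastic (subtopology X (fst p)) \<and>
     compactin X (snd p) \<and> snd p \<subseteq> fst p"

lemma list_all2_in_set2E:
  assumes "list_all2 P xs ys" "y \<in> set ys"
  obtains x where "x \<in> set xs" "P x y"
  using assms by (induction rule: list_all2_induct) auto

lemma sorted_wrt_disjnt_shrink:
  "list_all2 (\<lambda>A B. B \<subseteq> A) As Bs \<Longrightarrow> sorted_wrt disjnt As \<Longrightarrow> sorted_wrt disjnt Bs"
proof (induction rule: list_all2_induct)
  case (Cons A As B Bs)
  have "disjnt B B'" if B': "B' \<in> set Bs" for B'
  proof -
    obtain A' where "A' \<in> set As" "B' \<subseteq> A'"
      using list_all2_in_set2E[OF Cons.hyps(2) B'] by blast
    then show ?thesis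
      using Cons.hyps(1) Cons.prems by (auto simp: disjnt_def)
  qed
  then show ?case
    using Cons by simp
qed simp

lemma elastic_charts_push_off:
  assumes H: "Hausdorff_space X" and LK: "locally_K_elastic X"
  shows "\<forall>p\<in>set Es. elastic_chart X p \<Longrightarrow> sorted_wrt disjnt (map fst Es) \<Longrightarrow>
    a \<in> nowhere_dense_sets X \<Longrightarrow>
    \<exists>g Es'. g \<in> compactly_supported_homeos X \<and> supported_in (\<Union>(fst ` set Es)) g \<and>
      map snd Es' = map snd Es \<and> list_all2 (\<lambda>p q. fst q \<subseteq> fst p) Es Es' \<and>
      (\<forall>q\<in>set Es'. elastic_chart X q \<and> disjnt (fst q) (g ` a))"
proof (induction Es arbitrary: a)
  case Nil
  then show ?case
    using id_in_compactly_supported_homeos supported_in_id by fastforce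
next
  case (Cons p Es)
  obtain E C where p: "p = (E, C)"
    by fastforce
  define D where "D = \<Union>(fst ` set Es)"
  have chart: "openin X E" "K_elastic (subtopology X E)" "compactin X C" "C \<subseteq> E"
    using Cons.prems(1) p by (auto simp: elastic_chart_def)
  have ED: "disjnt E D"
    using Cons.prems(2) p by (auto simp: D_def disjnt_def)
  have sorted: "sorted_wrt disjnt (map fst Es)"
    using Cons.prems(2) by simp
  obtain g E' where g: "g \<in> compactly_supported_homeos X" "supported_in E g"
    "openin X E'" "K_elastic (subtopology X E')" "C \<subseteq> E'" "E' \<subseteq> E" "disjnt (g ` a) E'"
    using K_elastic_avoid_nowhere_dense[OF H LK chart Cons.prems(3)] .
  have "g ` a \<in> nowhere_dense_sets X"
    using g(1) Cons.prems(3) by (simp add: compactly_supported_homeos_def nowhere_dense_sets_image)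
  moreover have "\<forall>q\<in>set Es. elastic_chart X q"
    using Cons.prems(1) by simp
  ultimately obtain h Es' where h: "h \<in> compactly_supported_homeos X" "supported_in D h"
    "map snd Es' = map snd Es" "list_all2 (\<lambda>p q. fst q \<subseteq> fst p) Es Es'"
    "\<forall>q\<in>set Es'. elastic_chart X q \<and> disjnt (fst q) (h ` g ` a)"
    using Cons.IH[OF _ sorted] unfolding D_def by blast
  have "disjnt D E'"
    using ED g(6) by (auto simp: disjnt_def)
  then have "disjnt E' ((h \<circ> g) ` a)"
    using supported_in_image_disjnt[OF h(2) _ g(7)] by (simp add: image_comp disjnt_sym)
  then have "\<forall>q\<in>set ((E', C) # Es'). elastic_chart X q \<and> disjnt (fst q) ((h \<circ> g) ` a)"
    using g(3-5) chart(3) h(5) by (auto simp: elastic_chart_def image_comp)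
  moreover have "supported_in (\<Union>(fst ` set (p # Es))) (h \<circ> g)"
    using supported_in_comp[OF g(2) h(2)] p by (simp add: D_def)
  moreover have "h \<circ> g \<in> compactly_supported_homeos X"
    using g(1) h(1) H by (rule compactly_supported_homeos_comp)
  moreover have "map snd ((E', C) # Es') = map snd (p # Es)"
    using h(3) p by simp
  moreover have "list_all2 (\<lambda>p q. fst q \<subseteq> fst p) (p # Es) ((E', C) # Es')"
    using h(4) g(6) p by simp
  ultimately show ?case
    by blast
qed

definition dc_invariant :: "'a topology \<Rightarrow> 'a set \<Rightarrow> ('a set \<times> 'a set) list \<Rightarrow> bool" where
  "dc_invariant X F Es \<longleftrightarrow> F \<in> nowhere_dense_sets X \<and>
     (\<forall>p\<in>set Es. elastic_chart X p \<and> disjnt (fst p) F) \<and> sorted_wrt disjnt (map fst Es)"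

definition chart_cores :: "('a set \<times> 'a set) list \<Rightarrow> 'a set" where
  "chart_cores Es = \<Union>(snd ` set Es)"

lemma dc_invariant_enlarge_core:
  assumes inv: "dc_invariant X F Es" and i: "i < length Es"
    and D: "compactin X D" "D \<subseteq> fst (Es ! i)"
  defines "Es' \<equiv> Es[i := (fst (Es ! i), snd (Es ! i) \<union> D)]"
  shows "dc_invariant X F Es'" and "chart_cores Es \<union> D \<subseteq> chart_cores Es'"
proof -
  have "Es ! i \<in> set Es"
    using i by simp
  then have "elastic_chart X (fst (Es ! i), snd (Es ! i) \<union> D) \<and> disjnt (fst (Es ! i)) F"
    using inv D by (auto simp: dc_invariant_def elastic_chart_def compactin_Un)
  moreover have "set Es' \<subseteq> insert (fst (Es ! i), snd (Es ! i) \<union> D) (set Es)"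
    unfolding Es'_def by (rule set_update_subset_insert)
  moreover have "map fst Es' = map fst Es"
    using i by (simp add: Es'_def map_update) (metis list_update_id nth_map)
  ultimately show "dc_invariant X F Es'"
    using inv by (auto simp: dc_invariant_def)
  have "Es' ! i \<in> set Es'"
    using i by (simp add: Es'_def set_update_memI)
  then have core_i: "snd (Es ! i) \<union> D \<subseteq> chart_cores Es'"
    using i by (auto simp: chart_cores_def Es'_def)
  have "snd p \<subseteq> chart_cores Es'" if "p \<in> set Es" for p
  proof -
    obtain j where j: "j < length Es" "p = Es ! j"
      using \<open>p \<in> set Es\<close> by (auto simp: in_set_conv_nth)
    show ?thesis
    proof (cases "j = i")
      case True
      then show ?thesis
        using j core_i by blast
    next
      case False
      then have "p \<in> set Es'"
        using j by (metis Es'_def length_list_update nth_list_update_neq nth_mem)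
      then show ?thesis
        by (auto simp: chart_cores_def)
    qed
  qed
  then show "chart_cores Es \<union> D \<subseteq> chart_cores Es'"
    using core_i by (auto simp: chart_cores_def)
qed

definition cores_contain_open_subset ::
  "'a topology \<Rightarrow> 'a set \<Rightarrow> ('a set \<times> 'a set) list \<Rightarrow> bool" where
  "cores_contain_open_subset X U Es \<longleftrightarrow>
     (\<exists>V. openin X V \<and> V \<noteq> {} \<and> V \<subseteq> U \<and> V \<subseteq> chart_cores Es)"

lemma dc_invariant_grow_core:
  assumes H: "Hausdorff_space X" and inv: "dc_invariant X F Es"
    and U: "openin X U" and i: "i < length Es" and x: "x \<in> U \<inter> fst (Es ! i)"
  obtains Es' where "dc_invariant X F Es'" "chart_cores Es \<subseteq> chart_cores Es'"
    "cores_contain_open_subset X U Es'"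
proof -
  have "Es ! i \<in> set Es"
    using i by simp
  then have E: "openin X (fst (Es ! i))" "K_elastic (subtopology X (fst (Es ! i)))"
    using inv by (auto simp: dc_invariant_def elastic_chart_def)
  then have "locally_compact_space (subtopology X (fst (Es ! i)))"
    by (simp add: K_elastic_def)
  then obtain W where W: "openin X W" "x \<in> W" "compactin X (X closure_of W)"
    "X closure_of W \<subseteq> U \<inter> fst (Es ! i)"
    using locally_compact_open_nbhd_compact_closure[OF H E(1) _ openin_Int[OF U E(1)] _ x]
    by blast
  have "W \<subseteq> X closure_of W"
    using closure_of_subset[OF openin_subset[OF W(1)]] .
  then show ?thesis
    using that dc_invariant_enlarge_core[OF inv i W(3)] W
    unfolding cores_contain_open_subset_def by blast
qed

lemma dc_invariant_add_chart:
  assumes H: "Hausdorff_space X" and LK: "locally_K_elastic X" and inv: "dc_invariant X F Es"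
    and U: "openin X U" "U \<noteq> {}" "disjnt U F" "\<And>p. p \<in> set Es \<Longrightarrow> disjnt U (fst p)"
  obtains Es' where "dc_invariant X F Es'" "chart_cores Es \<subseteq> chart_cores Es'"
    "cores_contain_open_subset X U Es'"
proof -
  obtain x where "x \<in> U"
    using U(2) by blast
  then obtain B where B: "openin X B" "x \<in> B" "B \<subseteq> U" "K_elastic (subtopology X B)"
    using LK[unfolded locally_K_elastic_def, rule_format, of U x] U(1) by blast
  then have "locally_compact_space (subtopology X B)"
    by (simp add: K_elastic_def)
  then obtain W where W: "openin X W" "x \<in> W" "compactin X (X closure_of W)"
    "X closure_of W \<subseteq> B"
    using locally_compact_open_nbhd_compact_closure[OF H B(1) _ B(1) order_refl B(2)] by blast
  have "W \<subseteq> X closure_of W"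
    using closure_of_subset[OF openin_subset[OF W(1)]] .
  then have "cores_contain_open_subset X U ((B, X closure_of W) # Es)"
    using W B(3) unfolding cores_contain_open_subset_def chart_cores_def by auto
  moreover have "disjnt B (fst p)" if "p \<in> set Es" for p
    using U(4)[OF that] B(3) by (auto simp: disjnt_def)
  moreover have "elastic_chart X (B, X closure_of W)"
    using B W by (simp add: elastic_chart_def)
  then have "dc_invariant X F ((B, X closure_of W) # Es)"
    using inv disjnt_subset1[OF U(3) B(3)] calculation(2) by (simp add: dc_invariant_def)
  moreover have "chart_cores Es \<subseteq> chart_cores ((B, X closure_of W) # Es)"
    by (auto simp: chart_cores_def)
  ultimately show ?thesis
    using that by blast
qed

lemma dc_invariant_add_core:
  assumes H: "Hausdorff_space X" and LK: "locally_K_elastic X"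
    and inv: "dc_invariant X F Es" and U: "openin X U"
  obtains Es' where "dc_invariant X F Es'" "chart_cores Es \<subseteq> chart_cores Es'"
    "U \<noteq> {} \<Longrightarrow> cores_contain_open_subset X U Es'"
proof (cases "U = {}")
  case True
  then show ?thesis
    using that inv by blast
next
  case False
  have F: "F \<in> nowhere_dense_sets X"
    using inv by (simp add: dc_invariant_def)
  define U' where "U' = U - X closure_of F"
  have U': "openin X U'" "U' \<noteq> {}" "disjnt U' F"
    using U openin_diff_closure_of_nowhere_dense[OF F U False] closure_of_subset[of F X] F
    by (auto simp: U'_def openin_diff disjnt_def nowhere_dense_sets_def)
  have mono: "cores_contain_open_subset X U' Es' \<Longrightarrow> cores_contain_open_subset X U Es'" for Es'
    unfolding cores_contain_open_subset_def U'_def by blast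
  show ?thesis
  proof (cases "\<exists>i<length Es. U' \<inter> fst (Es ! i) \<noteq> {}")
    case True
    then obtain i x where "i < length Es" "x \<in> U' \<inter> fst (Es ! i)"
      by blast
    then show ?thesis
      using dc_invariant_grow_core[OF H inv U'(1)] that mono by metis
  next
    case False
    then have "disjnt U' (fst p)" if "p \<in> set Es" for p
      using that by (auto simp: in_set_conv_nth disjnt_def)
    then show ?thesis
      using dc_invariant_add_chart[OF H LK inv U'] that mono by metis
  qed
qed

definition dc_step ::
  "'a topology \<Rightarrow> 'a set \<Rightarrow> 'a set \<Rightarrow> ('a set \<times> 'a set) list \<Rightarrow> 'a set \<Rightarrow> ('a \<Rightarrow> 'a) \<Rightarrow>
    ('a set \<times> 'a set) list \<Rightarrow> bool" where
  "dc_step X U F Es a g Es' \<longleftrightarrow> g \<in> compactly_supported_homeos X \<and> (\<forall>x\<in>F. g x = x) \<and>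
     dc_invariant X (F \<union> g ` a) Es' \<and> chart_cores Es \<subseteq> chart_cores Es' \<and>
     (U \<noteq> {} \<longrightarrow> cores_contain_open_subset X U Es')"

lemma dc_step_exists:
  assumes H: "Hausdorff_space X" and LK: "locally_K_elastic X"
    and inv: "dc_invariant X F Es" and U: "openin X U" and a: "a \<in> nowhere_dense_sets X"
  shows "\<exists>g Es'. dc_step X U F Es a g Es'"
proof -
  obtain Es1 where inv1: "dc_invariant X F Es1" and cores1: "chart_cores Es \<subseteq> chart_cores Es1"
    and hole: "U \<noteq> {} \<Longrightarrow> cores_contain_open_subset X U Es1"
    using dc_invariant_add_core[OF H LK inv U] by blast
  have F: "F \<in> nowhere_dense_sets X" and charts1: "\<forall>p\<in>set Es1. elastic_chart X p"
    and F_disjnt: "\<forall>p\<in>set Es1. disjnt (fst p) F" and sorted1: "sorted_wrt disjnt (map fst Es1)"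
    using inv1 by (auto simp: dc_invariant_def)
  obtain g Es' where g: "g \<in> compactly_supported_homeos X" "supported_in (\<Union>(fst ` set Es1)) g"
    and snd_eq: "map snd Es' = map snd Es1" and shrink: "list_all2 (\<lambda>p q. fst q \<subseteq> fst p) Es1 Es'"
    and charts': "\<forall>q\<in>set Es'. elastic_chart X q \<and> disjnt (fst q) (g ` a)"
    using elastic_charts_push_off[OF H LK charts1 sorted1 a] by blast
  have fixes_F: "\<forall>x\<in>F. g x = x"
    using g(2) F_disjnt unfolding supported_in_def disjnt_def by blast
  have "F \<union> g ` a \<in> nowhere_dense_sets X"
    using g(1) F a by (simp add: compactly_supported_homeos_def nowhere_dense_sets_Un nowhere_dense_sets_image)
  moreover have "elastic_chart X q \<and> disjnt (fst q) (F \<union> g ` a)" if q: "q \<in> set Es'" for q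
  proof -
    obtain p where "p \<in> set Es1" "fst q \<subseteq> fst p"
      using list_all2_in_set2E[OF shrink q] by blast
    then have "disjnt (fst q) F"
      using F_disjnt disjnt_subset1 by blast
    then show ?thesis
      using charts' q by (simp add: disjnt_Un2)
  qed
  moreover have "list_all2 (\<lambda>A B. B \<subseteq> A) (map fst Es1) (map fst Es')"
    using shrink by (simp add: list_all2_map1 list_all2_map2)
  then have "sorted_wrt disjnt (map fst Es')"
    using sorted1 by (rule sorted_wrt_disjnt_shrink)
  ultimately have "dc_invariant X (F \<union> g ` a) Es'"
    by (simp add: dc_invariant_def)
  moreover have "chart_cores Es' = chart_cores Es1"
    using arg_cong[OF snd_eq, of set] by (simp add: chart_cores_def)
  ultimately have "dc_step X U F Es a g Es'"
    using g(1) fixes_F cores1 hole unfolding dc_step_def cores_contain_open_subset_def by auto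
  then show ?thesis
    by blast
qed

lemma metrizable_separable_countable_pi_base:
  assumes "metrizable_space X" "separable_space X"
  obtains U :: "nat \<Rightarrow> 'a set" where "\<And>k. openin X (U k)"
    "\<And>V. openin X V \<Longrightarrow> V \<noteq> {} \<Longrightarrow> \<exists>k. U k \<noteq> {} \<and> U k \<subseteq> V"
proof -
  obtain M d where "Metric_space M d" and X: "X = Metric_space.mtopology M d"
    using assms(1) unfolding metrizable_space_def by blast
  interpret Metric_space M d by fact
  obtain C where C: "countable C" "C \<subseteq> M" "mtopology closure_of C = M"
    using assms(2) unfolding separable_space_def X by auto
  define \<U> where "\<U> = insert {} ((\<lambda>(c, n). mball c (inverse (Suc n))) ` (C \<times> UNIV))"
  have "countable \<U>"
    using C(1) by (simp add: \<U>_def)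
  have "\<exists>W\<in>\<U>. W \<noteq> {} \<and> W \<subseteq> V" if V: "openin X V" "V \<noteq> {}" for V
  proof -
    obtain x where "x \<in> V"
      using V(2) by blast
    then obtain r where "r > 0" "mball x r \<subseteq> V" and "x \<in> M"
      using V(1) unfolding X openin_mtopology by blast
    then obtain n where n: "inverse (Suc n) < r / 2"
      using reals_Archimedean[of "r / 2"] by auto
    have "x \<in> mtopology closure_of C"
      using C(3) \<open>x \<in> M\<close> by simp
    moreover have "x \<in> mball x (inverse (Suc n))"
      using \<open>x \<in> M\<close> by (simp del: in_mball)
    ultimately obtain c where "c \<in> C" "c \<in> mball x (inverse (Suc n))"
      unfolding in_closure_of using openin_mball by blast
    then have "mball c (inverse (Suc n)) \<subseteq> mball x r"
      using n \<open>x \<in> M\<close> by (intro mball_subset) (auto simp: commute)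
    moreover have "c \<in> mball c (inverse (Suc n))"
      using \<open>c \<in> C\<close> C(2) by (auto simp del: in_mball)
    ultimately show ?thesis
      using \<open>c \<in> C\<close> \<open>mball x r \<subseteq> V\<close> unfolding \<U>_def by blast
  qed
  moreover have "openin X W" if "W \<in> \<U>" for W
    using that unfolding \<U>_def X by auto
  moreover have "from_nat_into \<U> k \<in> \<U>" for k
    by (rule from_nat_into) (simp add: \<U>_def)
  ultimately show ?thesis
    using that[of "from_nat_into \<U>"] from_nat_into_surj[OF \<open>countable \<U>\<close>] by metis
qed

section \<open>The strategy of Player II\<close>

definition dc_response ::
  "'a topology \<Rightarrow> 'a set \<Rightarrow> 'a set \<Rightarrow> ('a set \<times> 'a set) list \<Rightarrow> 'a set \<Rightarrow>
    ('a \<Rightarrow> 'a) \<times> ('a set \<times> 'a set) list" where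
  "dc_response X U F Es a = (SOME (g, Es'). dc_step X U F Es a g Es')"

lemma dc_response_step:
  assumes "Hausdorff_space X" "locally_K_elastic X"
    and "dc_invariant X F Es" "openin X U" "a \<in> nowhere_dense_sets X"
  shows "dc_step X U F Es a (fst (dc_response X U F Es a)) (snd (dc_response X U F Es a))"
proof -
  have "\<exists>p. dc_step X U F Es a (fst p) (snd p)"
    using dc_step_exists[OF assms] by auto
  then show ?thesis
    unfolding dc_response_def split_beta by (rule someI_ex)
qed

text \<open>The state after round \<open>n\<close>: the union of the moves \<open>\<gamma>\<^sub>m[a\<^sub>m]\<close> for \<open>m \<le> n\<close>, the list of
  charts (open set, core), and the answer \<open>\<gamma>\<^sub>n\<close>.\<close>

primrec dc_run :: "'a topology \<Rightarrow> (nat \<Rightarrow> 'a set) \<Rightarrow> (nat \<Rightarrow> 'a set) \<Rightarrow> nat \<Rightarrow>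
    'a set \<times> ('a set \<times> 'a set) list \<times> ('a \<Rightarrow> 'a)" where
  "dc_run X U a 0 = (a 0, [], id)"
| "dc_run X U a (Suc n) =
    (let (F, Es, _) = dc_run X U a n; (g, Es') = dc_response X (U n) F Es (a (Suc n))
     in (F \<union> g ` a (Suc n), Es', g))"

text \<open>The round number is read off the length of the history; the empty history never occurs.\<close>

definition dc_strategy :: "'a topology \<Rightarrow> (nat \<Rightarrow> 'a set) \<Rightarrow> 'a set list \<Rightarrow> 'a \<Rightarrow> 'a" where
  "dc_strategy X U as = snd (snd (dc_run X U ((!) as) (length as - 1)))"

lemma dc_run_cong: "(\<And>i. i \<le> n \<Longrightarrow> a i = b i) \<Longrightarrow> dc_run X U a n = dc_run X U b n"
  by (induction n) (auto simp: Let_def split_beta)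

lemma dc_strategy_map_upt: "dc_strategy X U (map a [0..<Suc n]) = snd (snd (dc_run X U a n))"
proof -
  have "dc_run X U ((!) (map a [0..<Suc n])) n = dc_run X U a n"
    by (rule dc_run_cong) (simp add: nth_map_upt less_Suc_eq_le del: upt_Suc)
  then show ?thesis
    by (simp add: dc_strategy_def del: upt_Suc)
qed

context
  fixes X :: "'a topology" and U :: "nat \<Rightarrow> 'a set" and a :: "nat \<Rightarrow> 'a set"
  assumes H: "Hausdorff_space X" and LK: "locally_K_elastic X"
    and U_open: "\<And>k. openin X (U k)" and a: "\<And>n. a n \<in> nowhere_dense_sets X"
begin

abbreviation "played n \<equiv> fst (dc_run X U a n)"
abbreviation "charts n \<equiv> fst (snd (dc_run X U a n))"
abbreviation "answer n \<equiv> snd (snd (dc_run X U a n))"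

lemma played_Suc: "played (Suc n) = played n \<union> answer (Suc n) ` a (Suc n)"
  by (simp add: Let_def split_beta)

lemma dc_run_invariant: "dc_invariant X (played n) (charts n)"
  and dc_run_step: "dc_step X (U n) (played n) (charts n) (a (Suc n)) (answer (Suc n)) (charts (Suc n))"
proof -
  have step: "dc_step X (U n) (played n) (charts n) (a (Suc n)) (answer (Suc n)) (charts (Suc n))"
    if "dc_invariant X (played n) (charts n)" for n
    using dc_response_step[OF H LK that U_open a] by (simp add: Let_def split_beta)
  show inv: "dc_invariant X (played n) (charts n)" for n
  proof (induction n)
    case 0
    then show ?case
      using a by (simp add: dc_invariant_def)
  next
    case (Suc n)
    then show ?case
      using step[OF Suc] played_Suc by (simp add: dc_step_def)
  qed
  show "dc_step X (U n) (played n) (charts n) (a (Suc n)) (answer (Suc n)) (charts (Suc n))"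
    using step[OF inv] .
qed

lemma answer_in_compactly_supported_homeos: "answer n \<in> compactly_supported_homeos X"
  using dc_run_step[of "n - 1"] id_in_compactly_supported_homeos
  by (cases n) (auto simp: dc_step_def)

lemma answer_image_subset_played: "answer m ` a m \<subseteq> played n" if "m \<le> n"
  using that
proof (induction n rule: dec_induct)
  case base
  then show ?case
    by (cases m) (auto simp: Let_def split_beta)
next
  case (step k)
  then show ?case
    using played_Suc[of k] by blast
qed

lemma answer_fixes_earlier: "answer n x = x" if "m < n" "x \<in> answer m ` a m"
proof -
  obtain k where "n = Suc k" "m \<le> k"
    using \<open>m < n\<close> by (metis less_Suc_eq_le less_imp_Suc_add)
  then show ?thesis
    using dc_run_step[of k] answer_image_subset_played[of m k] that(2)
    by (auto simp: dc_step_def)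
qed

lemma chart_cores_mono: "chart_cores (charts m) \<subseteq> chart_cores (charts n)" if "m \<le> n"
  using that
proof (induction n rule: dec_induct)
  case (step k)
  then show ?case
    using dc_run_step[of k] by (auto simp: dc_step_def)
qed simp

lemma answers_nowhere_dense:
  assumes U_pi_base: "\<And>V. openin X V \<Longrightarrow> V \<noteq> {} \<Longrightarrow> \<exists>k. U k \<noteq> {} \<and> U k \<subseteq> V"
  shows "(\<Union>n. answer n ` a n) \<in> nowhere_dense_sets X"
proof -
  define A where "A = (\<Union>n. answer n ` a n)"
  have "answer n ` a n \<subseteq> topspace X" for n
    using answer_image_subset_played[of n n] dc_run_invariant[of n]
    by (auto simp: dc_invariant_def nowhere_dense_sets_def)
  then have "A \<subseteq> topspace X"
    by (simp add: A_def UN_subset_iff)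
  moreover have "X interior_of (X closure_of A) = {}"
  proof (rule ccontr)
    assume "X interior_of (X closure_of A) \<noteq> {}"
    then obtain k where k: "U k \<noteq> {}" "U k \<subseteq> X interior_of (X closure_of A)"
      using U_pi_base[OF openin_interior_of] by blast
    then obtain V where V: "openin X V" "V \<noteq> {}" "V \<subseteq> U k" "V \<subseteq> chart_cores (charts (Suc k))"
      using dc_run_step[of k] by (auto simp: dc_step_def cores_contain_open_subset_def)
    have "disjnt V (answer m ` a m)" for m
    proof -
      define N where "N = max (Suc k) m"
      have "\<forall>p\<in>set (charts N). elastic_chart X p \<and> disjnt (fst p) (played N)"
        using dc_run_invariant[of N] by (simp add: dc_invariant_def)
      then have "disjnt (chart_cores (charts N)) (played N)"
        unfolding chart_cores_def elastic_chart_def disjnt_def by blast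
      moreover have "V \<subseteq> chart_cores (charts N)"
        using V(4) chart_cores_mono[of "Suc k" N] by (simp add: N_def)
      moreover have "answer m ` a m \<subseteq> played N"
        by (rule answer_image_subset_played) (simp add: N_def)
      ultimately show ?thesis
        by (rule disjnt_subset2[OF disjnt_subset1])
    qed
    then have "V \<inter> A = {}"
      by (auto simp: A_def disjnt_def)
    then have "V \<inter> X closure_of A = {}"
      by (simp add: openin_Int_closure_of_eq_empty[OF V(1)])
    moreover have "V \<subseteq> X closure_of A"
      using V(3) k(2) interior_of_subset[of X "X closure_of A"] by blast
    ultimately show False
      using V(2) by blast
  qed
  ultimately show ?thesis
    by (simp add: A_def nowhere_dense_sets_def)
qed

end

lemma dc_strategy_winning:
  assumes "Hausdorff_space X" "locally_K_elastic X" "\<And>k. openin X (U k)"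
    and "\<And>V. openin X V \<Longrightarrow> V \<noteq> {} \<Longrightarrow> \<exists>k. U k \<noteq> {} \<and> U k \<subseteq> V"
  shows "DC_II_winning_strategy (compactly_supported_homeos X) (nowhere_dense_sets X) (dc_strategy X U)"
  unfolding DC_II_winning_strategy_def dc_strategy_map_upt
  using answer_in_compactly_supported_homeos[OF assms(1-3)] answer_fixes_earlier[OF assms(1-3)]
    answers_nowhere_dense[OF assms(1-3) _ assms(4)]
  by (auto simp: dc_strategy_def)

theorem mainTheorem8:
  fixes X :: "'a topology"
  assumes "Polish_space X"
    and "locally_K_elastic X"
    and "\<forall>x \<in> topspace X. \<not> openin X {x}"
  shows "DC_II_wins (compactly_supported_homeos X) (nowhere_dense_sets X)"
proof -
  have metrizable: "metrizable_space X" and separable: "separable_space X"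
    using assms(1) completely_metrizable_imp_metrizable_space by (auto simp: Polish_space_def)
  obtain U :: "nat \<Rightarrow> 'a set" where U: "\<And>k. openin X (U k)"
    "\<And>V. openin X V \<Longrightarrow> V \<noteq> {} \<Longrightarrow> \<exists>k. U k \<noteq> {} \<and> U k \<subseteq> V"
    using metrizable_separable_countable_pi_base[OF metrizable separable] by blast
  have "Hausdorff_space X"
    using metrizable by (rule metrizable_imp_Hausdorff_space)
  then have "DC_II_winning_strategy (compactly_supported_homeos X) (nowhere_dense_sets X)
      (dc_strategy X U)"
    using assms(2) U by (rule dc_strategy_winning)
  then show ?thesis
    unfolding DC_II_wins_def by blast
qed

end
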